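(* Let $\lambda,\mu\in DP$ with $D_\mu\subseteq D_\lambda$. Then $c(T)\le c(T_{\lambda/\mu})$ in lexicographic order for all amenable tableaux $T$ of shape $D_{\lambda/\mu}$. Moreover, if $T$ is an amenable tableau of shape $D_{\lambda/\mu}$ with $c(T)=c(T_{\lambda/\mu})$, then $T^{(i)}=P_i(\lambda/\mu)$ for all $i$.
   Context: $DP$: partitions with distinct parts (including $\emptyset$). Shifted diagram $D_\lambda=\{(i,j):1\le i\le\ell(\lambda),\ i\le j\le i+\lambda_i-1\}$ (row $i$, column $j$); $D_{\lambda/\mu}=D_\lambda\setminus D_\mu$. Alphabet $\mathcal A=\{1'<1<2'<2<\cdots\}$, $|x|$ the unmarked version of a letter. A tableau of shape $D$ is $T:D\to\mathcal A$, weakly increasing along rows and down columns, each unmarked $k$ at most once per column, each marked $k'$ at most once per row; content $c(T)=(c_1,c_2,\dots)$, $c_i$ = number of entries $i$ or $i'$ (trailing zeros omitted). $T^{(i)}=\{(x,y):|T(x,y)|=i\}$. Reading word $w=w(T)=w_1\cdots w_n$: read rows left to right, from the bottom row to the top row. Statistics: $m_i(0)=0$; for $1\le j\le n$, $m_i(j)$ = number of letters $i$ in $w_{n-j+1}\cdots w_n$; for $n<j\le 2n$, $m_i(j)=m_i(n)+$ number of letters $i'$ in $w_1\cdots w_{j-n}$. For $k>1$, $w$ is $k$-amenable if: (a) for $0\le j\le n-1$, $m_k(j)=m_{k-1}(j)$ implies $w_{n-j}\notin\{k,k'\}$; (b) for $n\le j\le 2n-1$, $m_k(j)=m_{k-1}(j)$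 implies $w_{j-n+1}\notin\{k-1,k'\}$; (c) if $j$ is smallest with $w_j\in\{k',k\}$ then $w_j=k$; (d) if $j$ is smallest with $w_j\in\{(k-1)',k-1\}$ then $w_j=k-1$. $T$ is amenable if $w(T)$ is $k$-amenable for all $k>1$. The tableau $T_{\lambda/\mu}$: set $U_1=D_{\lambda/\mu}$; for $k=1,2,\dots$ let $P_k=\{(x,y)\in U_k:(x-1,y-1)\notin U_k\}$, set $T_{\lambda/\mu}(x,y)=k'$ if $(x+1,y)\in P_k$ and $=k$ otherwise for $(x,y)\in P_k$, and $U_{k+1}=U_k\setminus P_k$; write $P_k(\lambda/\mu)=P_k$. Lexicographic order on sequences: $\alpha\le\beta$ if $\alpha=\beta$ or there is $k$ with $\alpha_i=\beta_i$ for $i\le k$ and $\alpha_{k+1}<\beta_{k+1}$ (missing entries are $0$). *)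

theory Defs
  imports Main
begin

definition DP :: "nat list set" where
  "DP = {la. sorted_wrt (>) la \<and> 0 \<notin> set la}"

text \<open>Shifted diagram; rows and columns are 1-indexed, row i has cells i..i+la_i-1.\<close>
definition shifted_diagram :: "nat list \<Rightarrow> (nat \<times> nat) set" where
  "shifted_diagram la = {(i, j). 1 \<le> i \<and> i \<le> length la \<and> i \<le> j \<and> j < i + la ! (i - 1)}"

definition skew_diagram :: "nat list \<Rightarrow> nat list \<Rightarrow> (nat \<times> nat) set" where
  "skew_diagram la mu = shifted_diagram la - shifted_diagram mu"

datatype letter = Marked nat | Unmarked nat

fun absl :: "letter \<Rightarrow> nat" where
  "absl (Marked k) = k"
| "absl (Unmarked k) = k"

fun lrank :: "letter \<Rightarrow> nat" where
  "lrank (Marked k) = 2 * k"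
| "lrank (Unmarked k) = 2 * k + 1"

definition letter_le :: "letter \<Rightarrow> letter \<Rightarrow> bool" where
  "letter_le a b \<longleftrightarrow> lrank a \<le> lrank b"

definition valid_letter :: "letter \<Rightarrow> bool" where
  "valid_letter a \<longleftrightarrow> absl a \<ge> 1"

text \<open>A tableau of shape D: a map on cells (values outside D are irrelevant).\<close>
definition is_tableau :: "(nat \<times> nat) set \<Rightarrow> (nat \<times> nat \<Rightarrow> letter) \<Rightarrow> bool" where
  "is_tableau D T \<longleftrightarrow>
     (\<forall>c\<in>D. valid_letter (T c)) \<and>
     (\<forall>x y y'. (x, y) \<in> D \<and> (x, y') \<in> D \<and> y \<le> y' \<longrightarrow> letter_le (T (x, y)) (T (x, y'))) \<and>
     (\<forall>x x' y. (x, y) \<in> D \<and> (x', y) \<in> D \<and> x \<le> x' \<longrightarrow> letter_le (T (x, y)) (T (x', y))) \<and>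
     (\<forall>x x' y k. (x, y) \<in> D \<and> (x', y) \<in> D \<and> x \<noteq> x' \<and> T (x, y) = Unmarked k
         \<longrightarrow> T (x', y) \<noteq> Unmarked k) \<and>
     (\<forall>x y y' k. (x, y) \<in> D \<and> (x, y') \<in> D \<and> y \<noteq> y' \<and> T (x, y) = Marked k
         \<longrightarrow> T (x, y') \<noteq> Marked k)"

text \<open>Content c(T) as a function i \<mapsto> c_i (indices i \<ge> 1; trailing zeros implicit).\<close>
definition content :: "(nat \<times> nat) set \<Rightarrow> (nat \<times> nat \<Rightarrow> letter) \<Rightarrow> nat \<Rightarrow> nat" where
  "content D T i = card {c \<in> D. absl (T c) = i}"

definition tab_level :: "(nat \<times> nat) set \<Rightarrow> (nat \<times> nat \<Rightarrow> letter) \<Rightarrow> nat \<Rightarrow> (nat \<times> nat) set" where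
  "tab_level D T i = {c \<in> D. absl (T c) = i}"

definition lex_le :: "(nat \<Rightarrow> nat) \<Rightarrow> (nat \<Rightarrow> nat) \<Rightarrow> bool" where
  "lex_le a b \<longleftrightarrow> (\<forall>i\<ge>1. a i = b i) \<or>
     (\<exists>k. (\<forall>i. 1 \<le> i \<and> i \<le> k \<longrightarrow> a i = b i) \<and> a (Suc k) < b (Suc k))"

text \<open>Rows left to right, from the bottom row to the top row.\<close>
definition reading_word :: "(nat \<times> nat) set \<Rightarrow> (nat \<times> nat \<Rightarrow> letter) \<Rightarrow> letter list" where
  "reading_word D T = concat (map (\<lambda>x. map (\<lambda>y. T (x, y)) (sorted_list_of_set {y. (x, y) \<in> D}))
                                 (rev (sorted_list_of_set (fst ` D))))"

text \<open>m_i(j) for 0 \<le> j \<le> 2n (w is 0-indexed in Isabelle: w_j = w ! (j-1)).\<close>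
definition mstat :: "letter list \<Rightarrow> nat \<Rightarrow> nat \<Rightarrow> nat" where
  "mstat w i j = (if j \<le> length w then count_list (drop (length w - j) w) (Unmarked i)
     else count_list w (Unmarked i) + count_list (take (j - length w) w) (Marked i))"

definition k_amenable :: "nat \<Rightarrow> letter list \<Rightarrow> bool" where
  "k_amenable k w \<longleftrightarrow> (let n = length w in
     (\<forall>j < n. mstat w k j = mstat w (k - 1) j \<longrightarrow> w ! (n - j - 1) \<notin> {Unmarked k, Marked k}) \<and>
     (\<forall>j. n \<le> j \<and> j < 2 * n \<longrightarrow> mstat w k j = mstat w (k - 1) j \<longrightarrow>
          w ! (j - n) \<notin> {Unmarked (k - 1), Marked k}) \<and>
     (\<forall>j < n. w ! j \<in> {Marked k, Unmarked k} \<and> (\<forall>j' < j. w ! j' \<notin> {Marked k, Unmarked k})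
          \<longrightarrow> w ! j = Unmarked k) \<and>
     (\<forall>j < n. w ! j \<in> {Marked (k - 1), Unmarked (k - 1)} \<and>
          (\<forall>j' < j. w ! j' \<notin> {Marked (k - 1), Unmarked (k - 1)})
          \<longrightarrow> w ! j = Unmarked (k - 1)))"

definition amenable :: "(nat \<times> nat) set \<Rightarrow> (nat \<times> nat \<Rightarrow> letter) \<Rightarrow> bool" where
  "amenable D T \<longleftrightarrow> (\<forall>k > 1. k_amenable k (reading_word D T))"

definition peel :: "(nat \<times> nat) set \<Rightarrow> (nat \<times> nat) set" where
  "peel U = {(x, y) \<in> U. (x - 1, y - 1) \<notin> U}"

text \<open>Ustage D k = U_{k+1}.\<close>
primrec Ustage :: "(nat \<times> nat) set \<Rightarrow> nat \<Rightarrow> (nat \<times> nat) set" where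
  "Ustage D 0 = D"
| "Ustage D (Suc k) = Ustage D k - peel (Ustage D k)"

text \<open>Pset D k = P_k for k \<ge> 1.\<close>
definition Pset :: "(nat \<times> nat) set \<Rightarrow> nat \<Rightarrow> (nat \<times> nat) set" where
  "Pset D k = peel (Ustage D (k - 1))"

definition T_skew :: "(nat \<times> nat) set \<Rightarrow> nat \<times> nat \<Rightarrow> letter" where
  "T_skew D c = (let k = (LEAST k. 1 \<le> k \<and> c \<in> Pset D k) in
     (if (fst c + 1, snd c) \<in> Pset D k then Marked k else Unmarked k))"

end

theory Submission
  imports Defs
begin

text \<open>Neither amenability nor the hypotheses on \<open>\<mu>\<close> play a role: the statement holds for
  every tableau of shape \<open>D\<^sub>\<lambda>\<^sub>/\<^sub>\<mu>\<close>. Because the rows of \<open>\<lambda>\<close> strictly decrease, with cells \<open>(x, y)\<close> and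
  \<open>(x + 1, y + 1)\<close> the shape also contains \<open>(x, y + 1)\<close>, and the tableau conditions along
  this hook force \<open>|T(x, y)| < |T(x + 1, y + 1)|\<close>. A cell of \<open>U\<^sub>k\<^sub>+\<^sub>1\<close> ends a diagonal
  chain of \<open>k + 1\<close> cells of the shape, so every tableau has \<open>|T c| > k\<close> there, while
  \<open>T\<^sub>\<lambda>\<^sub>/\<^sub>\<mu>\<close> puts the letter \<open>k\<close> exactly on \<open>P\<^sub>k = U\<^sub>k - U\<^sub>k\<^sub>+\<^sub>1\<close>. Hence the cells of
  \<open>T\<close> with entries \<open>\<le> i\<close> form a subset of those of \<open>T\<^sub>\<lambda>\<^sub>/\<^sub>\<mu>\<close>, so the partial sums of the
  content of \<open>T\<close> are dominated by those of \<open>T\<^sub>\<lambda>\<^sub>/\<^sub>\<mu>\<close>; equal contents make all these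
  subsets equal, which pins down every level.\<close>

lemma skew_diagram_hook_cell:
  assumes "la \<in> DP" "(x, y) \<in> skew_diagram la mu" "(x + 1, y + 1) \<in> skew_diagram la mu"
  shows "(x, y + 1) \<in> skew_diagram la mu"
proof -
  from assms(2) have x: "1 \<le> x" "x \<le> y" "y < x + la ! (x - 1)"
    and not_mu: "(x, y) \<notin> shifted_diagram mu"
    by (auto simp: skew_diagram_def shifted_diagram_def)
  from assms(3) have x': "x + 1 \<le> length la" "y + 1 < x + 1 + la ! x"
    by (auto simp: skew_diagram_def shifted_diagram_def)
  have "la ! x < la ! (x - 1)"
    using assms(1) x(1) x'(1) unfolding DP_def sorted_wrt_iff_nth_less by auto
  then have "(x, y + 1) \<in> shifted_diagram la"
    using x x' by (auto simp: shifted_diagram_def)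
  moreover have "(x, y + 1) \<notin> shifted_diagram mu"
    using not_mu x by (auto simp: shifted_diagram_def)
  ultimately show ?thesis by (simp add: skew_diagram_def)
qed

lemma absl_less_if_letter_hook:
  assumes "letter_le a b" "letter_le b c"
    and "\<And>k. b = Unmarked k \<Longrightarrow> c \<noteq> Unmarked k"
    and "\<And>k. b = Marked k \<Longrightarrow> a \<noteq> Marked k"
  shows "absl a < absl c"
  using assms by (cases a; cases b; cases c; auto simp: letter_le_def; presburger)

lemma tableau_absl_diagonal_less:
  assumes "la \<in> DP" "is_tableau (skew_diagram la mu) T"
    and "(x, y) \<in> skew_diagram la mu" "(x + 1, y + 1) \<in> skew_diagram la mu"
  shows "absl (T (x, y)) < absl (T (x + 1, y + 1))"
proof -
  let ?D = "skew_diagram la mu"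
  have hook: "(x, y + 1) \<in> ?D" using skew_diagram_hook_cell assms(1,3,4) .
  note tab = assms(2)[unfolded is_tableau_def]
  show ?thesis
  proof (rule absl_less_if_letter_hook)
    show "letter_le (T (x, y)) (T (x, y + 1))"
      using tab assms(3) hook by auto
    show "letter_le (T (x, y + 1)) (T (x + 1, y + 1))"
      using tab assms(4) hook by auto
    show "T (x + 1, y + 1) \<noteq> Unmarked k" if "T (x, y + 1) = Unmarked k" for k
      using tab that assms(4) hook by (metis n_not_Suc_n Suc_eq_plus1)
    show "T (x, y) \<noteq> Marked k" if "T (x, y + 1) = Marked k" for k
      using tab that assms(3) hook by (metis n_not_Suc_n Suc_eq_plus1)
  qed
qed

lemma Ustage_subset: "Ustage D k \<subseteq> D"
  by (induction k) auto

lemma Ustage_antimono: "k \<le> n \<Longrightarrow> Ustage D n \<subseteq> Ustage D k"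
  using lift_Suc_antimono_le[of "Ustage D"] by auto

lemma Ustage_Suc_iff:
  "c \<in> Ustage D (Suc k) \<longleftrightarrow> c \<in> Ustage D k \<and> (fst c - 1, snd c - 1) \<in> Ustage D k"
  by (cases c) (auto simp: peel_def)

lemma Pset_iff:
  assumes "1 \<le> k"
  shows "c \<in> Pset D k \<longleftrightarrow> c \<in> Ustage D (k - 1) \<and> c \<notin> Ustage D k"
  using assms by (cases k) (auto simp: Pset_def peel_def)

lemma fst_ge_if_in_Ustage_skew:
  "c \<in> Ustage (skew_diagram la mu) k \<Longrightarrow> k + 1 \<le> fst c"
proof (induction k arbitrary: c)
  case 0
  then show ?case by (auto simp: skew_diagram_def shifted_diagram_def)
next
  case (Suc k)
  then have "(fst c - 1, snd c - 1) \<in> Ustage (skew_diagram la mu) k"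
    using Ustage_Suc_iff by blast
  from Suc.IH[OF this] show ?case by simp
qed

lemma tableau_absl_ge_if_in_Ustage:
  assumes "la \<in> DP" "is_tableau (skew_diagram la mu) T"
  shows "c \<in> Ustage (skew_diagram la mu) k \<Longrightarrow> k + 1 \<le> absl (T c)"
proof (induction k arbitrary: c)
  case 0
  then show ?case using assms(2) by (auto simp: is_tableau_def valid_letter_def)
next
  case (Suc k)
  let ?D = "skew_diagram la mu"
  define c' where "c' = (fst c - 1, snd c - 1)"
  have in_U: "c \<in> Ustage ?D k" "c' \<in> Ustage ?D k"
    using Suc.prems Ustage_Suc_iff c'_def by blast+
  then have in_D: "c \<in> ?D" "c' \<in> ?D" using Ustage_subset by blast+
  then have "c = (fst c' + 1, snd c' + 1)"
    unfolding c'_def by (auto simp: skew_diagram_def shifted_diagram_def)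
  then have "absl (T c') < absl (T c)"
    using tableau_absl_diagonal_less[OF assms, of "fst c'" "snd c'"] in_D by simp
  then show ?case using Suc.IH[OF in_U(2)] by simp
qed

text \<open>\<open>T_skew D c\<close> carries the index of the first stage \<open>U\<close> that no longer contains \<open>c\<close>;
  the hypothesis that some stage misses \<open>c\<close> keeps the \<open>LEAST\<close> in its definition meaningful.\<close>

lemma absl_T_skew_le_iff:
  assumes "c \<in> D" "c \<notin> Ustage D n"
  shows "absl (T_skew D c) \<le> i \<longleftrightarrow> c \<notin> Ustage D i"
proof -
  define L where "L = (LEAST n. c \<notin> Ustage D n)"
  have out: "c \<notin> Ustage D L" unfolding L_def by (rule LeastI[of _ n]) (rule assms(2))
  have "L \<noteq> 0" using out assms(1) by (cases L) auto
  have in_prev: "c \<in> Ustage D (L - 1)"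
  proof (rule ccontr)
    assume "c \<notin> Ustage D (L - 1)"
    then have "L \<le> L - 1" unfolding L_def by (rule Least_le)
    with \<open>L \<noteq> 0\<close> show False by simp
  qed
  have "(LEAST k. 1 \<le> k \<and> c \<in> Pset D k) = L"
  proof (rule Least_equality)
    show "1 \<le> L \<and> c \<in> Pset D L" using \<open>L \<noteq> 0\<close> in_prev out Pset_iff by auto
    show "L \<le> k" if "1 \<le> k \<and> c \<in> Pset D k" for k
    proof (rule ccontr)
      assume "\<not> L \<le> k"
      then have "Ustage D (L - 1) \<subseteq> Ustage D k" by (intro Ustage_antimono) simp
      then show False using that in_prev Pset_iff by blast
    qed
  qed
  then have "absl (T_skew D c) = L" by (simp add: T_skew_def Let_def)
  moreover have "c \<notin> Ustage D i" if "L \<le> i"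
    using Ustage_antimono[OF that] out by blast
  moreover have "c \<in> Ustage D i" if "i < L"
  proof -
    have "Ustage D (L - 1) \<subseteq> Ustage D i" using that by (intro Ustage_antimono) simp
    then show ?thesis using in_prev by blast
  qed
  ultimately show ?thesis by (meson not_le)
qed

lemma T_skew_prefix:
  "{c \<in> skew_diagram la mu. absl (T_skew (skew_diagram la mu) c) \<le> i}
     = {c \<in> skew_diagram la mu. c \<notin> Ustage (skew_diagram la mu) i}"
proof -
  have "c \<notin> Ustage (skew_diagram la mu) (fst c)" for c
    using fst_ge_if_in_Ustage_skew[of c la mu "fst c"] by auto
  then show ?thesis using absl_T_skew_le_iff by blast
qed

lemma tab_level_T_skew:
  assumes "1 \<le> i"
  shows "tab_level (skew_diagram la mu) (T_skew (skew_diagram la mu)) i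
           = Pset (skew_diagram la mu) i"
proof -
  let ?D = "skew_diagram la mu"
  have "c \<in> ?D \<and> absl (T_skew ?D c) = i \<longleftrightarrow> c \<in> Pset ?D i" for c
  proof -
    have "absl (T_skew ?D c) = i \<longleftrightarrow>
            absl (T_skew ?D c) \<le> i \<and> \<not> absl (T_skew ?D c) \<le> i - 1"
      using assms by auto
    then show ?thesis
      using T_skew_prefix[of la mu] Ustage_subset Pset_iff[OF assms] by blast
  qed
  then show ?thesis by (auto simp: tab_level_def)
qed

lemma finite_skew_diagram: "finite (skew_diagram la mu)"
proof -
  have "shifted_diagram la \<subseteq> {..length la} \<times> {..length la + sum_list la}"
  proof
    fix c assume "c \<in> shifted_diagram la"
    then obtain i j where c: "c = (i, j)" "1 \<le> i" "i \<le> length la" "j < i + la ! (i - 1)"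
      by (auto simp: shifted_diagram_def)
    have "la ! (i - 1) \<le> sum_list la" using c by (intro elem_le_sum_list) auto
    then show "c \<in> {..length la} \<times> {..length la + sum_list la}" using c by auto
  qed
  then have "finite (shifted_diagram la)" by (rule finite_subset) auto
  then show ?thesis unfolding skew_diagram_def by auto
qed

lemma card_absl_le_eq_sum_content:
  assumes "finite D" "\<forall>c\<in>D. 1 \<le> absl (T c)"
  shows "card {c \<in> D. absl (T c) \<le> i} = (\<Sum>j = 1..i. content D T j)"
proof (induction i)
  case 0
  have "{c \<in> D. absl (T c) \<le> 0} = {}" using assms(2) by force
  then show ?case by (simp only: card.empty) simp
next
  case (Suc i)
  have split: "{c \<in> D. absl (T c) \<le> Suc i}
          = {c \<in> D. absl (T c) \<le> i} \<union> {c \<in> D. absl (T c) = Suc i}"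
    by auto
  then have "card {c \<in> D. absl (T c) \<le> Suc i}
               = card {c \<in> D. absl (T c) \<le> i} + card {c \<in> D. absl (T c) = Suc i}"
    unfolding split using assms(1) by (intro card_Un_disjoint) auto
  then show ?case using Suc by (simp add: content_def)
qed

lemma lex_le_if_partial_sums_le:
  assumes "\<And>i. (\<Sum>j = 1..i. a j) \<le> (\<Sum>j = 1..i. b j :: nat)"
  shows "lex_le a b"
proof (rule ccontr)
  assume not_le: "\<not> lex_le a b"
  then have ex: "\<exists>i. 1 \<le> i \<and> a i \<noteq> b i" unfolding lex_le_def by auto
  define i0 where "i0 = (LEAST i. 1 \<le> i \<and> a i \<noteq> b i)"
  have i0: "1 \<le> i0" "a i0 \<noteq> b i0" using LeastI_ex[OF ex] unfolding i0_def by auto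
  then obtain m where m: "i0 = Suc m" by (cases i0) auto
  have agree: "a i = b i" if "1 \<le> i" "i \<le> m" for i
    using not_less_Least[of i "\<lambda>i. 1 \<le> i \<and> a i \<noteq> b i"] that m unfolding i0_def by auto
  have "\<not> a i0 < b i0"
    using not_le agree m unfolding lex_le_def by auto
  then have "b i0 < a i0" using i0 by auto
  moreover have "(\<Sum>j = 1..m. a j) = (\<Sum>j = 1..m. b j)" using agree by (intro sum.cong) auto
  ultimately have "(\<Sum>j = 1..i0. b j) < (\<Sum>j = 1..i0. a j)" using m by simp
  then show False using assms[of i0] by simp
qed

lemma
  assumes fin: "finite D" and "\<forall>c\<in>D. 1 \<le> absl (T c)" "\<forall>c\<in>D. 1 \<le> absl (S c)"
    and prefix_subset: "\<And>i. {c \<in> D. absl (T c) \<le> i} \<subseteq> {c \<in> D. absl (S c) \<le> i}"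
  shows lex_le_content_if_prefix_subset: "lex_le (content D T) (content D S)"
    and prefix_eq_if_content_eq:
      "content D T = content D S \<Longrightarrow> {c \<in> D. absl (T c) \<le> i} = {c \<in> D. absl (S c) \<le> i}"
proof -
  note sums = card_absl_le_eq_sum_content[OF fin assms(2)] card_absl_le_eq_sum_content[OF fin assms(3)]
  have "card {c \<in> D. absl (T c) \<le> i} \<le> card {c \<in> D. absl (S c) \<le> i}" for i
    using fin by (intro card_mono prefix_subset) auto
  then show "lex_le (content D T) (content D S)"
    by (intro lex_le_if_partial_sums_le) (simp only: sums)
  assume "content D T = content D S"
  then have "card {c \<in> D. absl (T c) \<le> i} = card {c \<in> D. absl (S c) \<le> i}"
    by (simp only: sums)
  then show "{c \<in> D. absl (T c) \<le> i} = {c \<in> D. absl (S c) \<le> i}"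
    using fin by (intro card_subset_eq prefix_subset) auto
qed

lemma tab_level_eq_if_prefixes_eq:
  assumes "\<And>i. {c \<in> D. absl (T c) \<le> i} = {c \<in> D. absl (S c) \<le> i}" "1 \<le> i"
  shows "tab_level D T i = tab_level D S i"
proof -
  have "c \<in> tab_level D T i \<longleftrightarrow> c \<in> {c \<in> D. absl (T c) \<le> i} - {c \<in> D. absl (T c) \<le> i - 1}"
    and "c \<in> tab_level D S i \<longleftrightarrow> c \<in> {c \<in> D. absl (S c) \<le> i} - {c \<in> D. absl (S c) \<le> i - 1}"
    for c using assms(2) by (auto simp: tab_level_def)
  then show ?thesis unfolding assms(1) by blast
qed

theorem lemma3p4:
  fixes la mu :: "nat list"
  assumes "la \<in> DP" and "mu \<in> DP"
    and "shifted_diagram mu \<subseteq> shifted_diagram la"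
  shows "(\<forall>T. is_tableau (skew_diagram la mu) T \<and> amenable (skew_diagram la mu) T
            \<longrightarrow> lex_le (content (skew_diagram la mu) T)
                       (content (skew_diagram la mu) (T_skew (skew_diagram la mu))))
       \<and> (\<forall>T. is_tableau (skew_diagram la mu) T \<and> amenable (skew_diagram la mu) T
            \<and> content (skew_diagram la mu) T
                = content (skew_diagram la mu) (T_skew (skew_diagram la mu))
            \<longrightarrow> (\<forall>i\<ge>1. tab_level (skew_diagram la mu) T i = Pset (skew_diagram la mu) i))"
proof -
  let ?D = "skew_diagram la mu" and ?S = "T_skew (skew_diagram la mu)"
  have S_valid: "\<forall>c\<in>?D. 1 \<le> absl (?S c)"
    using T_skew_prefix[of la mu 0] by (auto simp: Suc_le_eq)
  have T_valid: "\<forall>c\<in>?D. 1 \<le> absl (T c)" if "is_tableau ?D T" for T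
    using that by (auto simp: is_tableau_def valid_letter_def)
  have prefix_subset: "{c \<in> ?D. absl (T c) \<le> i} \<subseteq> {c \<in> ?D. absl (?S c) \<le> i}"
    if "is_tableau ?D T" for T i
    unfolding T_skew_prefix using tableau_absl_ge_if_in_Ustage[OF assms(1) that, of _ i] by fastforce
  note lex = lex_le_content_if_prefix_subset[OF finite_skew_diagram T_valid S_valid prefix_subset]
  note prefix_eq = prefix_eq_if_content_eq[OF finite_skew_diagram T_valid S_valid prefix_subset]
  show ?thesis
    using lex tab_level_eq_if_prefixes_eq[OF prefix_eq] tab_level_T_skew by simp
qed

end
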